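(* Suppose the equation of state is asymptotically polytropic with $n_0=3$. Then no orbit of the system lying in the interior of the cube $(0,1)^3$ converges as $\lambda\to+\infty$ to the fixed point $P_1=(U,Q,\Omega)=(0,1/2,0)$. Consequently every orbit from the interior of the cube has $P_2=(0,1,0)$ as its $\omega$-limit.
   Context: Equation of state: $\rho=\rho(p)$ with $\rho>0$ for $p>0$, $\eta(p)=\int_0^p dp'/\rho(p')$ finite; index function $n(\eta)=\frac{\eta}{\rho}\frac{d\rho}{d\eta}$; asymptotically polytropic: $n$ is $C^1$ on $(0,\infty)$, bounded and non-negative, $n(\eta)-n_0=O(\eta^{a_0})$ as $\eta\to0$, $n(\eta)-n_1=O(\eta^{-a_1})$ as $\eta\to\infty$, $a_0,a_1>0$. The system on $[0,1]^3$ is $\frac{dU}{d\lambda}=U(1-U)[(1-Q)(3-4U)-n(\Omega)Q(1-U)]$, $\frac{dQ}{d\lambda}=Q(1-Q)[(2U-1)(1-Q)+Q(1-U)]$, $\frac{d\Omega}{d\lambda}=-a\Omega(1-\Omega)Q(1-U)$, with $0<a<\min(a_0,a_1)$ and $n(\Omega)=n(\eta)$ at $\eta=(\Omega/(1-\Omega))^{1/a}$, $n(0)=n_0$, $n(1)=n_1$. At $P_1$, for $n_0=3$, the linearization has a one-dimensional center subspace. *)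

theory Defs
  imports "HOL-Analysis.Analysis" "HOL-Library.Landau_Symbols"
begin

definition asymptotically_polytropic ::
  "(real \<Rightarrow> real) \<Rightarrow> real \<Rightarrow> real \<Rightarrow> real \<Rightarrow> real \<Rightarrow> bool" where
  "asymptotically_polytropic n n0 n1 a0 a1 \<longleftrightarrow>
     n C1_differentiable_on {0<..} \<and>
     bounded (n ` {0<..}) \<and>
     (\<forall>\<eta>>0. 0 \<le> n \<eta>) \<and>
     a0 > 0 \<and> a1 > 0 \<and>
     (\<lambda>\<eta>. n \<eta> - n0) \<in> O[at_right 0](\<lambda>\<eta>. \<eta> powr a0) \<and>
     (\<lambda>\<eta>. n \<eta> - n1) \<in> O[at_top](\<lambda>\<eta>. \<eta> powr (- a1))"

definition nOmega :: "(real \<Rightarrow> real) \<Rightarrow> real \<Rightarrow> real \<Rightarrow> real \<Rightarrow> real \<Rightarrow> real" where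
  "nOmega n n0 n1 a \<Omega> =
     (if \<Omega> = 0 then n0 else if \<Omega> = 1 then n1
      else n ((\<Omega> / (1 - \<Omega>)) powr (1 / a)))"

definition field :: "(real \<Rightarrow> real) \<Rightarrow> real \<Rightarrow> real \<Rightarrow> real \<Rightarrow>
    real \<times> real \<times> real \<Rightarrow> real \<times> real \<times> real" where
  "field n n0 n1 a p = (case p of (U, Q, \<Omega>) \<Rightarrow>
     (U * (1 - U) * ((1 - Q) * (3 - 4 * U) - nOmega n n0 n1 a \<Omega> * Q * (1 - U)),
      Q * (1 - Q) * ((2 * U - 1) * (1 - Q) + Q * (1 - U)),
      - a * \<Omega> * (1 - \<Omega>) * Q * (1 - U)))"

definition open_cube :: "(real \<times> real \<times> real) set" where
  "open_cube = {0<..<1} \<times> {0<..<1} \<times> {0<..<1}"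

definition omega_limit :: "(real \<Rightarrow> 'a::topological_space) \<Rightarrow> 'a set" where
  "omega_limit x = {p. \<exists>s::nat \<Rightarrow> real. filterlim s at_top sequentially \<and>
                        ((x \<circ> s) \<longlongrightarrow> p) sequentially}"

end

theory Submission
  imports Defs "HOL-Real_Asymp.Real_Asymp"
begin

(*
  Along an interior orbit \<Omega> decreases and U stays below max (U 0) (3/4). Because n0 = 3,
  |n(\<Omega>) - 3| \<le> K \<Omega> / (1 - \<Omega>), and the term - K / (a (1 - \<Omega>)) in
    3 logit Q + logit U - K / (a (1 - \<Omega>))
  has derivative K \<Omega> Q (1 - U) / (1 - \<Omega>), which absorbs that deviation: the function is a
  Lyapunov function with derivative at least 2 U (1 - Q). It bounds Q away from 0, so \<Omega>
  decays exponentially. It is bounded above on {Q \<le> 1 - \<epsilon>}, while each visit to that set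
  raises it by a fixed amount, because Q moves at speed at most 1 and U is bounded below
  there; hence Q \<rightarrow> 1. Then, as n(\<Omega>) \<rightarrow> 3, logit U eventually decreases at a linear rate,
  so U \<rightarrow> 0 and the orbit converges to P2.
*)

section \<open>Differential inequalities on the half-line\<close>

lemma has_vector_derivative_fst:
  "(x has_vector_derivative v) F \<Longrightarrow> ((\<lambda>t. fst (x t)) has_vector_derivative fst v) F"
  by (auto simp: has_vector_derivative_def dest: has_derivative_fst)

lemma has_vector_derivative_snd:
  "(x has_vector_derivative v) F \<Longrightarrow> ((\<lambda>t. snd (x t)) has_vector_derivative snd v) F"
  by (auto simp: has_vector_derivative_def dest: has_derivative_snd)

lemma continuous_on_halfline_if_deriv:
  fixes f f' :: "real \<Rightarrow> real"
  assumes "\<And>t. 0 \<le> t \<Longrightarrow> (f has_real_derivative f' t) (at t within {0..})"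
  shows "continuous_on {0..} f"
  using assms by (auto simp: continuous_on_eq_continuous_within intro: DERIV_continuous)

lemma increment_ge_if_deriv_ge:
  fixes f f' :: "real \<Rightarrow> real"
  assumes deriv: "\<And>t. 0 \<le> t \<Longrightarrow> (f has_real_derivative f' t) (at t within {0..})"
    and "0 \<le> s" "s \<le> t"
    and ge: "\<And>\<tau>. s < \<tau> \<Longrightarrow> \<tau> < t \<Longrightarrow> c \<le> f' \<tau>"
  shows "f s + c * (t - s) \<le> f t"
proof -
  have "f s - c * s \<le> f t - c * t"
  proof (rule DERIV_nonneg_imp_increasing_open[OF \<open>s \<le> t\<close>])
    fix \<tau> assume \<tau>: "s < \<tau>" "\<tau> < t"
    have "at \<tau> within {0..} = at \<tau>"
      using \<tau> \<open>0 \<le> s\<close> by (intro at_within_interior) auto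
    then have "((\<lambda>\<tau>. f \<tau> - c * \<tau>) has_real_derivative f' \<tau> - c) (at \<tau>)"
      using deriv[of \<tau>] \<tau> \<open>0 \<le> s\<close> by (auto intro!: derivative_eq_intros)
    then show "\<exists>y. ((\<lambda>\<tau>. f \<tau> - c * \<tau>) has_real_derivative y) (at \<tau>) \<and> 0 \<le> y"
      using ge[OF \<tau>] by auto
  next
    have "continuous_on {s..t} f"
      by (rule continuous_on_subset[OF continuous_on_halfline_if_deriv[OF deriv]])
        (use \<open>0 \<le> s\<close> in auto)
    then show "continuous_on {s..t} (\<lambda>\<tau>. f \<tau> - c * \<tau>)"
      by (intro continuous_intros)
  qed
  then show ?thesis
    by (simp add: algebra_simps)
qed

lemma increment_le_if_deriv_le:
  fixes f f' :: "real \<Rightarrow> real"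
  assumes deriv: "\<And>t. 0 \<le> t \<Longrightarrow> (f has_real_derivative f' t) (at t within {0..})"
    and "0 \<le> s" "s \<le> t"
    and le: "\<And>\<tau>. s < \<tau> \<Longrightarrow> \<tau> < t \<Longrightarrow> f' \<tau> \<le> c"
  shows "f t \<le> f s + c * (t - s)"
proof -
  have "- f s + (- c) * (t - s) \<le> - f t"
    by (rule increment_ge_if_deriv_ge[of _ "\<lambda>t. - f' t"])
      (use assms in \<open>auto intro: DERIV_minus\<close>)
  then show ?thesis
    by simp
qed

lemma le_max_if_deriv_neg_above:
  fixes f f' :: "real \<Rightarrow> real"
  assumes deriv: "\<And>t. 0 \<le> t \<Longrightarrow> (f has_real_derivative f' t) (at t within {0..})"
    and neg: "\<And>t. 0 < t \<Longrightarrow> c < f t \<Longrightarrow> f' t < 0"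
    and "0 \<le> t"
  shows "f t \<le> max (f 0) c"
proof -
  have "continuous_on {0..t} f"
    by (rule continuous_on_subset[OF continuous_on_halfline_if_deriv[OF deriv]]) auto
  then obtain m where m: "0 \<le> m" "m \<le> t" and max: "\<And>s. 0 \<le> s \<Longrightarrow> s \<le> t \<Longrightarrow> f s \<le> f m"
    using continuous_attains_sup[of "{0..t}" f] \<open>0 \<le> t\<close> by auto
  have "f m \<le> max (f 0) c"
  proof (rule ccontr)
    assume above: "\<not> f m \<le> max (f 0) c"
    then have "0 < m"
      using m by (cases "m = 0") auto
    then have "at m within {0..} = at m"
      by (intro at_within_interior) auto
    then have "(f has_real_derivative f' m) (at m)"
      using deriv[of m] m by simp
    moreover have "f' m < 0"
      using neg[OF \<open>0 < m\<close>] above by simp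
    ultimately obtain e where "0 < e" and left: "\<And>h. 0 < h \<Longrightarrow> h < e \<Longrightarrow> f m < f (m - h)"
      using DERIV_neg_dec_left by blast
    have "f m < f (m - min (e / 2) m)"
      using left \<open>0 < e\<close> \<open>0 < m\<close> by simp
    moreover have "f (m - min (e / 2) m) \<le> f m"
      using max m \<open>0 < e\<close> by simp
    ultimately show False
      by simp
  qed
  then show ?thesis
    using max[of t] \<open>0 \<le> t\<close> by simp
qed

definition logit :: "real \<Rightarrow> real" where
  "logit q = ln q - ln (1 - q)"

lemma logit_mono: "0 < q \<Longrightarrow> q \<le> r \<Longrightarrow> r < 1 \<Longrightarrow> logit q \<le> logit r"
  by (simp add: logit_def diff_mono)

lemma exp_logit: "0 < q \<Longrightarrow> q < 1 \<Longrightarrow> exp (logit q) = q / (1 - q)"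
  by (simp add: logit_def exp_diff)

lemma le_exp_logit: "0 < q \<Longrightarrow> q < 1 \<Longrightarrow> q \<le> exp (logit q)"
  by (simp add: exp_logit divide_simps)

lemma logistic_le_if_le_logit:
  assumes "0 < q" "q < 1" "l \<le> logit q"
  shows "exp l / (1 + exp l) \<le> q"
proof -
  have "exp l \<le> q / (1 - q)"
    using assms exp_logit[of q] by (metis exp_le_cancel_iff)
  then show ?thesis
    using assms by (simp add: field_simps add_pos_pos)
qed

lemma DERIV_logit_comp:
  assumes "(f has_real_derivative f') (at t within S)" "0 < f t" "f t < 1"
  shows "((\<lambda>t. logit (f t)) has_real_derivative f' / (f t * (1 - f t))) (at t within S)"
proof -
  have "((\<lambda>t. logit (f t)) has_real_derivative f' / f t - (- f') / (1 - f t)) (at t within S)"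
    unfolding logit_def using assms by (auto intro!: derivative_eq_intros)
  moreover have "f' / f t - (- f') / (1 - f t) = f' / (f t * (1 - f t))"
    using assms by (simp add: field_simps)
  ultimately show ?thesis
    by simp
qed

lemma filterlim_at_bot_if_deriv_le_neg:
  fixes g g' :: "real \<Rightarrow> real"
  assumes deriv: "\<And>t. 0 \<le> t \<Longrightarrow> (g has_real_derivative g' t) (at t within {0..})"
    and "0 < \<eta>" and bound: "eventually (\<lambda>t. g' t \<le> - \<eta>) at_top"
  shows "filterlim g at_bot at_top"
proof -
  obtain T where "0 \<le> T" and T: "\<And>t. T \<le> t \<Longrightarrow> g' t \<le> - \<eta>"
    using bound unfolding eventually_at_top_linorder by (metis max.bounded_iff max.cobounded2)
  have "eventually (\<lambda>t. g t \<le> g T - \<eta> * (t - T)) at_top"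
    using eventually_ge_at_top[of T]
  proof eventually_elim
    case (elim t)
    show ?case
      using increment_le_if_deriv_le[OF deriv \<open>0 \<le> T\<close> elim, of "- \<eta>"] T by simp
  qed
  moreover have "filterlim (\<lambda>t. g T - \<eta> * (t - T)) at_bot at_top"
    using \<open>0 < \<eta>\<close> by real_asymp
  ultimately show ?thesis
    using filterlim_at_bot_mono by blast
qed

lemma tendsto_0_if_le_exp_at_bot:
  fixes f g :: "'a \<Rightarrow> real"
  assumes "eventually (\<lambda>t. 0 \<le> f t \<and> f t \<le> exp (g t)) F" and "filterlim g at_bot F"
  shows "(f \<longlongrightarrow> 0) F"
proof (rule tendsto_sandwich[of "\<lambda>_. 0" f F "\<lambda>t. exp (g t)"])
  show "((\<lambda>t. exp (g t)) \<longlongrightarrow> 0) F"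
    using filterlim_compose[OF exp_at_bot assms(2)] .
qed (use assms(1) in \<open>auto elim: eventually_mono\<close>)

lemma eventually_not_if_recurring_increment:
  fixes \<Phi> :: "real \<Rightarrow> real"
  assumes mono: "\<And>s t. 0 \<le> s \<Longrightarrow> s \<le> t \<Longrightarrow> \<Phi> s \<le> \<Phi> t"
    and "0 < d" "0 < inc"
    and step: "\<And>t. 0 \<le> t \<Longrightarrow> P t \<Longrightarrow> \<Phi> t + inc \<le> \<Phi> (t + d)"
    and bounded: "\<And>t. 0 \<le> t \<Longrightarrow> P t \<Longrightarrow> \<Phi> t \<le> B"
  shows "eventually (\<lambda>t. \<not> P t) at_top"
proof (rule ccontr)
  assume "\<not> ?thesis"
  then have recur: "\<exists>t\<ge>T. P t" for T
    by (auto simp: eventually_at_top_linorder)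
  have climb: "\<exists>t\<ge>0. P t \<and> \<Phi> 0 + real m * inc \<le> \<Phi> t" for m :: nat
  proof (induction m)
    case 0
    then show ?case
      using recur[of 0] mono by fastforce
  next
    case (Suc m)
    then obtain t where "0 \<le> t" "P t" "\<Phi> 0 + real m * inc \<le> \<Phi> t"
      by blast
    moreover obtain t' where "t + d \<le> t'" "P t'"
      using recur by blast
    ultimately show ?case
      using step[of t] mono[of "t + d" t'] \<open>0 < d\<close>
      by (intro exI[of _ t']) (auto simp: algebra_simps)
  qed
  obtain m :: nat where "B - \<Phi> 0 < real m * inc"
    using reals_Archimedean3[OF \<open>0 < inc\<close>] by blast
  moreover obtain t where "0 \<le> t" "P t" "\<Phi> 0 + real m * inc \<le> \<Phi> t"
    using climb by blast
  ultimately show False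
    using bounded[of t] by linarith
qed

lemma omega_limit_eq_if_tendsto:
  fixes x :: "real \<Rightarrow> 'a::t2_space"
  assumes lim: "(x \<longlongrightarrow> p) at_top"
  shows "omega_limit x = {p}"
proof
  show "omega_limit x \<subseteq> {p}"
  proof
    fix q assume "q \<in> omega_limit x"
    then obtain s :: "nat \<Rightarrow> real" where "filterlim s at_top sequentially" "(x \<circ> s) \<longlonglongrightarrow> q"
      unfolding omega_limit_def by blast
    moreover from this(1) have "(x \<circ> s) \<longlonglongrightarrow> p"
      unfolding comp_def by (rule filterlim_compose[OF lim])
    ultimately show "q \<in> {p}"
      using LIMSEQ_unique by auto
  qed
  have "(x \<circ> real) \<longlonglongrightarrow> p"
    unfolding comp_def by (rule filterlim_compose[OF lim filterlim_real_sequentially])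
  then show "{p} \<subseteq> omega_limit x"
    unfolding omega_limit_def using filterlim_real_sequentially by blast
qed

section \<open>The index function near \<Omega> = 0\<close>

lemma asymptotically_polytropic_dev_le_powr:
  assumes ap: "asymptotically_polytropic n n0 n1 a0 a1" and "0 < a" "a \<le> a0"
  shows "\<exists>K>0. \<forall>\<eta>>0. \<bar>n \<eta> - n0\<bar> \<le> K * \<eta> powr a"
proof -
  from ap have near0_bigo: "(\<lambda>\<eta>. n \<eta> - n0) \<in> O[at_right 0](\<lambda>\<eta>. \<eta> powr a0)"
    and bdd: "bounded (n ` {0<..})"
    unfolding asymptotically_polytropic_def by auto
  obtain C where "0 < C" and "eventually (\<lambda>\<eta>. norm (n \<eta> - n0) \<le> C * norm (\<eta> powr a0)) (at_right 0)"
    using landau_o.bigE[OF near0_bigo] by blast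
  then obtain b where "0 < b" and near0: "\<And>\<eta>. 0 < \<eta> \<Longrightarrow> \<eta> < b \<Longrightarrow> \<bar>n \<eta> - n0\<bar> \<le> C * \<eta> powr a0"
    unfolding eventually_at_right_field by auto
  obtain M where M: "\<And>\<eta>. 0 < \<eta> \<Longrightarrow> \<bar>n \<eta>\<bar> \<le> M"
    using bdd unfolding bounded_iff by auto
  then have "0 \<le> M"
    by (meson abs_ge_zero order_trans zero_less_one)
  define d where "d = min b 1"
  have "0 < d" "d \<le> 1"
    using \<open>0 < b\<close> by (auto simp: d_def)
  define K where "K = C + (M + \<bar>n0\<bar>) / d powr a"
  have "0 < K"
    using \<open>0 < C\<close> \<open>0 \<le> M\<close> by (simp add: K_def add_pos_nonneg)
  moreover have "\<bar>n \<eta> - n0\<bar> \<le> K * \<eta> powr a" if "0 < \<eta>" for \<eta>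
  proof (cases "\<eta> < d")
    case True
    have "\<bar>n \<eta> - n0\<bar> \<le> C * \<eta> powr a0"
      using near0 \<open>0 < \<eta>\<close> True by (simp add: d_def)
    also have "\<dots> \<le> C * \<eta> powr a"
      using powr_mono'[of a a0 \<eta>] \<open>a \<le> a0\<close> True \<open>d \<le> 1\<close> \<open>0 < \<eta>\<close> \<open>0 < C\<close> by simp
    also have "\<dots> \<le> K * \<eta> powr a"
      using \<open>0 \<le> M\<close> by (intro mult_right_mono) (auto simp: K_def)
    finally show ?thesis .
  next
    case False
    have "\<bar>n \<eta> - n0\<bar> \<le> ((M + \<bar>n0\<bar>) / d powr a) * d powr a"
      using M[OF \<open>0 < \<eta>\<close>] \<open>0 < d\<close> by simp
    also have "\<dots> \<le> ((M + \<bar>n0\<bar>) / d powr a) * \<eta> powr a"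
      using False \<open>0 < d\<close> \<open>0 < a\<close> \<open>0 \<le> M\<close> by (intro mult_left_mono powr_mono2) auto
    also have "\<dots> \<le> K * \<eta> powr a"
      using \<open>0 < C\<close> by (intro mult_right_mono) (auto simp: K_def)
    finally show ?thesis .
  qed
  ultimately show ?thesis
    by blast
qed

lemma nOmega_dev_le:
  assumes "asymptotically_polytropic n n0 n1 a0 a1" and "0 < a" "a \<le> a0"
  shows "\<exists>K>0. \<forall>w. 0 < w \<longrightarrow> w < 1 \<longrightarrow> \<bar>nOmega n n0 n1 a w - n0\<bar> \<le> K * (w / (1 - w))"
proof -
  obtain K where "0 < K" and K: "\<And>\<eta>. 0 < \<eta> \<Longrightarrow> \<bar>n \<eta> - n0\<bar> \<le> K * \<eta> powr a"
    using asymptotically_polytropic_dev_le_powr[OF assms] by blast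
  have "\<bar>nOmega n n0 n1 a w - n0\<bar> \<le> K * (w / (1 - w))" if "0 < w" "w < 1" for w
    using K[of "(w / (1 - w)) powr (1 / a)"] that \<open>0 < a\<close> by (simp add: nOmega_def powr_powr)
  then show ?thesis
    using \<open>0 < K\<close> by blast
qed

section \<open>Interior orbits for n0 = 3\<close>

lemma field_Q_component_le_1:
  fixes q u :: real
  assumes "0 < q" "q < 1" "0 < u" "u < 1"
  shows "q * (1 - q) * ((2 * u - 1) * (1 - q) + q * (1 - u)) \<le> 1"
proof -
  have "(2 * u - 1) * (1 - q) \<le> 1 - q"
    using mult_right_mono[of "2 * u - 1" 1 "1 - q"] assms by simp
  moreover have "q * (1 - u) \<le> q"
    using mult_left_mono[of "1 - u" 1 q] assms by simp
  ultimately have "(2 * u - 1) * (1 - q) + q * (1 - u) \<le> 1"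
    by linarith
  then have "q * (1 - q) * ((2 * u - 1) * (1 - q) + q * (1 - u)) \<le> q * (1 - q) * 1"
    using assms by (intro mult_left_mono) auto
  also have "\<dots> \<le> 1"
    using mult_mono[of q 1 "1 - q" 1] assms by simp
  finally show ?thesis .
qed

locale interior_orbit =
  fixes n :: "real \<Rightarrow> real" and n1 a K :: real
    and x :: "real \<Rightarrow> real \<times> real \<times> real"
  assumes n_nonneg: "\<And>\<eta>. 0 < \<eta> \<Longrightarrow> 0 \<le> n \<eta>"
    and a_pos: "0 < a" and K_pos: "0 < K"
    and nOmega_dev: "\<And>w. 0 < w \<Longrightarrow> w < 1 \<Longrightarrow> \<bar>nOmega n 3 n1 a w - 3\<bar> \<le> K * (w / (1 - w))"
    and sol: "\<forall>t\<ge>0. (x has_vector_derivative field n 3 n1 a (x t)) (at t within {0..})"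
    and interior: "\<forall>t\<ge>0. x t \<in> open_cube"
begin

definition U :: "real \<Rightarrow> real" where "U t = fst (x t)"
definition Q :: "real \<Rightarrow> real" where "Q t = fst (snd (x t))"
definition \<Omega> :: "real \<Rightarrow> real" where "\<Omega> t = snd (snd (x t))"
definition N :: "real \<Rightarrow> real" where "N t = nOmega n 3 n1 a (\<Omega> t)"

lemma x_eq: "x t = (U t, Q t, \<Omega> t)"
  by (simp add: U_def Q_def \<Omega>_def)

lemma
  assumes "0 \<le> t"
  shows U_pos: "0 < U t" and U_lt_1: "U t < 1"
    and Q_pos: "0 < Q t" and Q_lt_1: "Q t < 1"
    and \<Omega>_pos: "0 < \<Omega> t" and \<Omega>_lt_1: "\<Omega> t < 1"
  using interior assms by (auto simp: open_cube_def x_eq)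

lemma N_nonneg: "0 \<le> t \<Longrightarrow> 0 \<le> N t"
  using n_nonneg[of "(\<Omega> t / (1 - \<Omega> t)) powr (1 / a)"] \<Omega>_pos[of t] \<Omega>_lt_1[of t]
  by (simp add: N_def nOmega_def)

lemma N_dev: "0 \<le> t \<Longrightarrow> \<bar>N t - 3\<bar> \<le> K * (\<Omega> t / (1 - \<Omega> t))"
  using nOmega_dev \<Omega>_pos \<Omega>_lt_1 by (simp add: N_def)

lemma
  assumes "0 \<le> t"
  shows DERIV_U: "(U has_real_derivative
      U t * (1 - U t) * ((1 - Q t) * (3 - 4 * U t) - N t * Q t * (1 - U t))) (at t within {0..})"
    and DERIV_Q: "(Q has_real_derivative
      Q t * (1 - Q t) * ((2 * U t - 1) * (1 - Q t) + Q t * (1 - U t))) (at t within {0..})"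
    and DERIV_\<Omega>: "(\<Omega> has_real_derivative
      - a * \<Omega> t * (1 - \<Omega> t) * Q t * (1 - U t)) (at t within {0..})"
proof -
  have x': "(x has_vector_derivative
      (U t * (1 - U t) * ((1 - Q t) * (3 - 4 * U t) - N t * Q t * (1 - U t)),
       Q t * (1 - Q t) * ((2 * U t - 1) * (1 - Q t) + Q t * (1 - U t)),
       - a * \<Omega> t * (1 - \<Omega> t) * Q t * (1 - U t))) (at t within {0..})"
    using sol assms by (simp add: field_def x_eq N_def)
  show "(U has_real_derivative
      U t * (1 - U t) * ((1 - Q t) * (3 - 4 * U t) - N t * Q t * (1 - U t))) (at t within {0..})"
    using has_vector_derivative_fst[OF x']
    by (simp add: has_real_derivative_iff_has_vector_derivative U_def[abs_def])
  show "(Q has_real_derivative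
      Q t * (1 - Q t) * ((2 * U t - 1) * (1 - Q t) + Q t * (1 - U t))) (at t within {0..})"
    using has_vector_derivative_fst[OF has_vector_derivative_snd[OF x']]
    by (simp add: has_real_derivative_iff_has_vector_derivative Q_def[abs_def])
  show "(\<Omega> has_real_derivative - a * \<Omega> t * (1 - \<Omega> t) * Q t * (1 - U t)) (at t within {0..})"
    using has_vector_derivative_snd[OF has_vector_derivative_snd[OF x']]
    by (simp add: has_real_derivative_iff_has_vector_derivative \<Omega>_def[abs_def])
qed

lemma \<Omega>_antimono:
  assumes "0 \<le> s" "s \<le> t"
  shows "\<Omega> t \<le> \<Omega> s"
proof -
  have "\<Omega> t \<le> \<Omega> s + 0 * (t - s)"
  proof (rule increment_le_if_deriv_le[OF DERIV_\<Omega> assms])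
    fix \<tau> assume "s < \<tau>" "\<tau> < t"
    then have "0 \<le> \<tau>"
      using assms by simp
    then have "0 \<le> a * \<Omega> \<tau> * (1 - \<Omega> \<tau>) * Q \<tau> * (1 - U \<tau>)"
      using a_pos \<Omega>_pos \<Omega>_lt_1 Q_pos U_lt_1 by (simp add: less_imp_le)
    then show "- a * \<Omega> \<tau> * (1 - \<Omega> \<tau>) * Q \<tau> * (1 - U \<tau>) \<le> 0"
      by simp
  qed
  then show ?thesis
    by simp
qed

definition U_max :: real where "U_max = max (U 0) (3 / 4)"

lemma U_max_lt_1: "U_max < 1"
  using U_lt_1[of 0] by (simp add: U_max_def)

lemma U_le_U_max:
  assumes "0 \<le> t"
  shows "U t \<le> U_max"
  unfolding U_max_def
proof (rule le_max_if_deriv_neg_above[OF DERIV_U _ assms])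
  fix t :: real assume "0 < t" "3 / 4 < U t"
  then have "(1 - Q t) * (3 - 4 * U t) < 0" and "0 \<le> N t * Q t * (1 - U t)"
    using Q_pos[of t] Q_lt_1[of t] U_lt_1[of t] N_nonneg[of t] by (auto simp: mult_pos_neg)
  then show "U t * (1 - U t) * ((1 - Q t) * (3 - 4 * U t) - N t * Q t * (1 - U t)) < 0"
    using U_pos U_lt_1 \<open>0 < t\<close> by (simp add: mult_pos_neg)
qed

lemma DERIV_logit_Q:
  assumes "0 \<le> t"
  shows "((\<lambda>t. logit (Q t)) has_real_derivative
      (2 * U t - 1) * (1 - Q t) + Q t * (1 - U t)) (at t within {0..})"
proof -
  have "((\<lambda>t. logit (Q t)) has_real_derivative
      Q t * (1 - Q t) * ((2 * U t - 1) * (1 - Q t) + Q t * (1 - U t)) / (Q t * (1 - Q t))) (at t within {0..})"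
    using DERIV_logit_comp[OF DERIV_Q[OF assms]] Q_pos[OF assms] Q_lt_1[OF assms] .
  then show ?thesis
    using Q_pos[OF assms] Q_lt_1[OF assms] by simp
qed

lemma DERIV_logit_U:
  assumes "0 \<le> t"
  shows "((\<lambda>t. logit (U t)) has_real_derivative
      (1 - Q t) * (3 - 4 * U t) - N t * Q t * (1 - U t)) (at t within {0..})"
proof -
  have "((\<lambda>t. logit (U t)) has_real_derivative
      U t * (1 - U t) * ((1 - Q t) * (3 - 4 * U t) - N t * Q t * (1 - U t)) / (U t * (1 - U t))) (at t within {0..})"
    using DERIV_logit_comp[OF DERIV_U[OF assms]] U_pos[OF assms] U_lt_1[OF assms] .
  then show ?thesis
    using U_pos[OF assms] U_lt_1[OF assms] by simp
qed

definition lyapunov :: "real \<Rightarrow> real" where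
  "lyapunov t = 3 * logit (Q t) + logit (U t) - K / (a * (1 - \<Omega> t))"

definition lyapunov_rate :: "real \<Rightarrow> real" where
  "lyapunov_rate t = 2 * U t * (1 - Q t) + (3 - N t + K * (\<Omega> t / (1 - \<Omega> t))) * Q t * (1 - U t)"

lemma DERIV_lyapunov:
  assumes "0 \<le> t"
  shows "(lyapunov has_real_derivative lyapunov_rate t) (at t within {0..})"
proof -
  have "1 - \<Omega> t \<noteq> 0" "a \<noteq> 0"
    using \<Omega>_lt_1[OF assms] a_pos by auto
  then have penalty: "((\<lambda>t. K / (a * (1 - \<Omega> t))) has_real_derivative
      - (K * (\<Omega> t / (1 - \<Omega> t)) * Q t * (1 - U t))) (at t within {0..})"
    by (auto intro!: derivative_eq_intros DERIV_\<Omega>[OF assms] simp: divide_simps)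
  have "(lyapunov has_real_derivative
      3 * ((2 * U t - 1) * (1 - Q t) + Q t * (1 - U t))
      + ((1 - Q t) * (3 - 4 * U t) - N t * Q t * (1 - U t))
      - - (K * (\<Omega> t / (1 - \<Omega> t)) * Q t * (1 - U t))) (at t within {0..})"
    unfolding lyapunov_def[abs_def]
    by (intro DERIV_diff DERIV_add DERIV_cmult DERIV_logit_Q[OF assms] DERIV_logit_U[OF assms] penalty)
  then show ?thesis
    by (simp add: lyapunov_rate_def algebra_simps)
qed

lemma lyapunov_rate_ge:
  assumes "0 \<le> t"
  shows "2 * U t * (1 - Q t) \<le> lyapunov_rate t"
proof -
  have "0 \<le> 3 - N t + K * (\<Omega> t / (1 - \<Omega> t))"
    using N_dev[OF assms] by linarith
  then have "0 \<le> (3 - N t + K * (\<Omega> t / (1 - \<Omega> t))) * Q t * (1 - U t)"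
    using Q_pos[OF assms] U_lt_1[OF assms] by simp
  then show ?thesis
    by (simp add: lyapunov_rate_def)
qed

lemma lyapunov_mono:
  assumes "0 \<le> s" "s \<le> t"
  shows "lyapunov s \<le> lyapunov t"
proof -
  have "lyapunov s + 0 * (t - s) \<le> lyapunov t"
  proof (rule increment_ge_if_deriv_ge[OF DERIV_lyapunov assms])
    fix \<tau> assume "s < \<tau>" "\<tau> < t"
    then have "0 \<le> \<tau>"
      using assms by simp
    then have "0 \<le> 2 * U \<tau> * (1 - Q \<tau>)"
      using U_pos[of \<tau>] Q_lt_1[of \<tau>] by simp
    then show "0 \<le> lyapunov_rate \<tau>"
      using lyapunov_rate_ge[OF \<open>0 \<le> \<tau>\<close>] by linarith
  qed
  then show ?thesis
    by simp
qed

lemma penalty_ge: "0 \<le> t \<Longrightarrow> K / a \<le> K / (a * (1 - \<Omega> t))"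
  using K_pos a_pos \<Omega>_pos[of t] \<Omega>_lt_1[of t] by (intro divide_left_mono) auto

lemma logit_U_le: "0 \<le> t \<Longrightarrow> logit (U t) \<le> logit U_max"
  using logit_mono U_pos U_le_U_max U_max_lt_1 by blast

lemma logit_sum_ge: "0 \<le> t \<Longrightarrow> lyapunov 0 + K / a \<le> 3 * logit (Q t) + logit (U t)"
  using lyapunov_mono[of 0 t] penalty_ge[of t] by (simp add: lyapunov_def)

lemma lyapunov_le: "0 \<le> t \<Longrightarrow> lyapunov t \<le> 3 * logit (Q t) + logit U_max - K / a"
  using logit_U_le[of t] penalty_ge[of t] by (simp add: lyapunov_def)

lemma Q_bounded_below:
  obtains q where "0 < q" "\<And>t. 0 \<le> t \<Longrightarrow> q \<le> Q t"
proof
  define l where "l = (lyapunov 0 + K / a - logit U_max) / 3"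
  show "0 < exp l / (1 + exp l)"
    by (simp add: add_pos_pos)
  fix t :: real assume "0 \<le> t"
  then have "l \<le> logit (Q t)"
    using logit_sum_ge[of t] logit_U_le[of t] by (simp add: l_def)
  then show "exp l / (1 + exp l) \<le> Q t"
    using logistic_le_if_le_logit Q_pos[OF \<open>0 \<le> t\<close>] Q_lt_1[OF \<open>0 \<le> t\<close>] by blast
qed

lemma U_bounded_below_where_Q_le:
  assumes "q < 1"
  obtains u where "0 < u" "\<And>t. 0 \<le> t \<Longrightarrow> Q t \<le> q \<Longrightarrow> u \<le> U t"
proof
  define l where "l = lyapunov 0 + K / a - 3 * logit q"
  show "0 < exp l / (1 + exp l)"
    by (simp add: add_pos_pos)
  fix t :: real assume "0 \<le> t" "Q t \<le> q"
  then have "logit (Q t) \<le> logit q"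
    using logit_mono Q_pos assms by blast
  then have "l \<le> logit (U t)"
    using logit_sum_ge[OF \<open>0 \<le> t\<close>] by (simp add: l_def)
  then show "exp l / (1 + exp l) \<le> U t"
    using logistic_le_if_le_logit U_pos[OF \<open>0 \<le> t\<close>] U_lt_1[OF \<open>0 \<le> t\<close>] by blast
qed

lemma \<Omega>_tendsto_0: "(\<Omega> \<longlongrightarrow> 0) at_top"
proof -
  obtain q where "0 < q" and q: "\<And>t. 0 \<le> t \<Longrightarrow> q \<le> Q t"
    using Q_bounded_below by blast
  define \<kappa> where "\<kappa> = a * (1 - \<Omega> 0) * q * (1 - U_max)"
  have "0 < \<kappa>"
    using a_pos \<Omega>_lt_1[of 0] \<open>0 < q\<close> U_max_lt_1 by (simp add: \<kappa>_def)
  have "filterlim (\<lambda>t. ln (\<Omega> t)) at_bot at_top"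
  proof (rule filterlim_at_bot_if_deriv_le_neg[OF _ \<open>0 < \<kappa>\<close>])
    show "((\<lambda>t. ln (\<Omega> t)) has_real_derivative - a * (1 - \<Omega> t) * Q t * (1 - U t))
        (at t within {0..})" if "0 \<le> t" for t
      using \<Omega>_pos[OF that]
      by (auto intro!: derivative_eq_intros DERIV_\<Omega>[OF that] simp: divide_simps)
    show "eventually (\<lambda>t. - a * (1 - \<Omega> t) * Q t * (1 - U t) \<le> - \<kappa>) at_top"
      using eventually_ge_at_top[of 0]
    proof eventually_elim
      case (elim t)
      have "1 - \<Omega> 0 \<le> 1 - \<Omega> t" "1 - U_max \<le> 1 - U t"
        using \<Omega>_antimono[of 0 t] U_le_U_max[of t] elim by auto
      then have "\<kappa> \<le> a * (1 - \<Omega> t) * Q t * (1 - U t)"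
        unfolding \<kappa>_def using a_pos \<Omega>_lt_1[of 0] \<open>0 < q\<close> q[OF elim] U_max_lt_1
        by (intro mult_mono) auto
      then show ?case
        by simp
    qed
  qed
  moreover have "eventually (\<lambda>t. 0 \<le> \<Omega> t \<and> \<Omega> t \<le> exp (ln (\<Omega> t))) at_top"
    using eventually_ge_at_top[of 0] by eventually_elim (simp add: \<Omega>_pos less_imp_le)
  ultimately show ?thesis
    by (intro tendsto_0_if_le_exp_at_bot)
qed

lemma N_tendsto_3: "(N \<longlongrightarrow> 3) at_top"
proof -
  have "((\<lambda>t. K * (\<Omega> t / (1 - \<Omega> t))) \<longlongrightarrow> K * (0 / (1 - 0))) at_top"
    by (intro tendsto_intros \<Omega>_tendsto_0) simp
  then have "((\<lambda>t. K * (\<Omega> t / (1 - \<Omega> t))) \<longlongrightarrow> 0) at_top"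
    by simp
  moreover have "eventually (\<lambda>t. norm (N t - 3) \<le> K * (\<Omega> t / (1 - \<Omega> t))) at_top"
    using eventually_ge_at_top[of 0] by eventually_elim (metis N_dev real_norm_def)
  ultimately have "((\<lambda>t. N t - 3) \<longlongrightarrow> 0) at_top"
    by (rule Lim_null_comparison[rotated])
  then show ?thesis
    by (rule LIM_zero_cancel)
qed

lemma Q_increment_le:
  assumes "0 \<le> s" "s \<le> t"
  shows "Q t \<le> Q s + (t - s)"
proof -
  have "Q t \<le> Q s + 1 * (t - s)"
  proof (rule increment_le_if_deriv_le[OF DERIV_Q assms])
    fix \<tau> assume "s < \<tau>" "\<tau> < t"
    then show "Q \<tau> * (1 - Q \<tau>) * ((2 * U \<tau> - 1) * (1 - Q \<tau>) + Q \<tau> * (1 - U \<tau>)) \<le> 1"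
      using assms Q_pos Q_lt_1 U_pos U_lt_1 by (intro field_Q_component_le_1) auto
  qed
  then show ?thesis
    by simp
qed

lemma Q_eventually_gt:
  assumes "0 < \<epsilon>" "\<epsilon> < 1"
  shows "eventually (\<lambda>t. 1 - \<epsilon> < Q t) at_top"
proof -
  obtain u where "0 < u" and u: "\<And>t. 0 \<le> t \<Longrightarrow> Q t \<le> 1 - \<epsilon> / 2 \<Longrightarrow> u \<le> U t"
    using U_bounded_below_where_Q_le[of "1 - \<epsilon> / 2"] assms by auto
  have "eventually (\<lambda>t. \<not> Q t \<le> 1 - \<epsilon>) at_top"
  proof (rule eventually_not_if_recurring_increment[OF lyapunov_mono])
    show "0 < \<epsilon> / 2" "0 < u * \<epsilon> * (\<epsilon> / 2)"
      using assms \<open>0 < u\<close> by auto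
    show "lyapunov t \<le> 3 * logit (1 - \<epsilon>) + logit U_max - K / a" if "0 \<le> t" "Q t \<le> 1 - \<epsilon>" for t
      using lyapunov_le[OF that(1)] logit_mono[of "Q t" "1 - \<epsilon>"] Q_pos[OF that(1)] that assms
      by simp
    show "lyapunov t + u * \<epsilon> * (\<epsilon> / 2) \<le> lyapunov (t + \<epsilon> / 2)" if "0 \<le> t" "Q t \<le> 1 - \<epsilon>" for t
    proof -
      have "lyapunov t + u * \<epsilon> * (t + \<epsilon> / 2 - t) \<le> lyapunov (t + \<epsilon> / 2)"
      proof (rule increment_ge_if_deriv_ge[OF DERIV_lyapunov that(1)])
        show "t \<le> t + \<epsilon> / 2"
          using assms by simp
        fix \<tau> assume "t < \<tau>" "\<tau> < t + \<epsilon> / 2"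
        then have "0 \<le> \<tau>" and "Q \<tau> \<le> 1 - \<epsilon> / 2"
          using Q_increment_le[of t \<tau>] that by auto
        then have "u * (\<epsilon> / 2) \<le> U \<tau> * (1 - Q \<tau>)"
          using u U_pos[OF \<open>0 \<le> \<tau>\<close>] \<open>0 < u\<close> assms by (intro mult_mono) auto
        then show "u * \<epsilon> \<le> lyapunov_rate \<tau>"
          using lyapunov_rate_ge[OF \<open>0 \<le> \<tau>\<close>] by linarith
      qed
      then show ?thesis
        by simp
    qed
  qed
  then show ?thesis
    by (simp add: not_le)
qed

lemma Q_tendsto_1: "(Q \<longlongrightarrow> 1) at_top"
proof (rule order_tendstoI)
  fix y :: real assume "y < 1"
  then have "eventually (\<lambda>t. 1 - min (1 - y) (1 / 2) < Q t) at_top"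
    by (intro Q_eventually_gt) auto
  then show "eventually (\<lambda>t. y < Q t) at_top"
    by eventually_elim linarith
next
  fix y :: real assume "1 < y"
  show "eventually (\<lambda>t. Q t < y) at_top"
    using eventually_ge_at_top[of 0] by eventually_elim (use Q_lt_1 \<open>1 < y\<close> in force)
qed

lemma U_tendsto_0: "(U \<longlongrightarrow> 0) at_top"
proof -
  define b where "b t = 3 * (1 - Q t) - N t * Q t * (1 - U_max)" for t
  have "(b \<longlongrightarrow> 3 * (1 - 1) - 3 * 1 * (1 - U_max)) at_top"
    unfolding b_def[abs_def] by (intro tendsto_intros Q_tendsto_1 N_tendsto_3)
  then have "eventually (\<lambda>t. b t < - (1 - U_max)) at_top"
    by (rule order_tendstoD) (use U_max_lt_1 in simp)
  then have "filterlim (\<lambda>t. logit (U t)) at_bot at_top"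
  proof (intro filterlim_at_bot_if_deriv_le_neg[OF DERIV_logit_U])
    show "0 < 1 - U_max"
      using U_max_lt_1 by simp
    assume "eventually (\<lambda>t. b t < - (1 - U_max)) at_top"
    with eventually_ge_at_top[of 0]
    show "eventually (\<lambda>t. (1 - Q t) * (3 - 4 * U t) - N t * Q t * (1 - U t) \<le> - (1 - U_max)) at_top"
    proof eventually_elim
      case (elim t)
      have "(1 - Q t) * (3 - 4 * U t) \<le> 3 * (1 - Q t)"
        using U_pos[of t] Q_lt_1[of t] elim by (simp add: algebra_simps)
      moreover have "N t * Q t * (1 - U_max) \<le> N t * Q t * (1 - U t)"
        using U_le_U_max[of t] N_nonneg[of t] Q_pos[of t] elim by (intro mult_left_mono) auto
      ultimately show ?case
        using elim by (simp add: b_def)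
    qed
  qed
  moreover have "eventually (\<lambda>t. 0 \<le> U t \<and> U t \<le> exp (logit (U t))) at_top"
    using eventually_ge_at_top[of 0]
    by eventually_elim (simp add: U_pos U_lt_1 le_exp_logit less_imp_le)
  ultimately show ?thesis
    by (intro tendsto_0_if_le_exp_at_bot)
qed

lemma tendsto_P2: "(x \<longlongrightarrow> (0, 1, 0)) at_top"
proof -
  have "x = (\<lambda>t. (U t, Q t, \<Omega> t))"
    using x_eq by auto
  then show ?thesis
    using tendsto_Pair[OF U_tendsto_0 tendsto_Pair[OF Q_tendsto_1 \<Omega>_tendsto_0]] by simp
qed

end

theorem mainTheorem11:
  fixes n :: "real \<Rightarrow> real" and n1 a0 a1 a :: real
    and x :: "real \<Rightarrow> real \<times> real \<times> real"
  assumes ap: "asymptotically_polytropic n 3 n1 a0 a1"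
    and a_pos: "0 < a" and a_lt: "a < min a0 a1"
    and sol: "\<forall>t\<ge>0. (x has_vector_derivative field n 3 n1 a (x t)) (at t within {0..})"
    and interior: "\<forall>t\<ge>0. x t \<in> open_cube"
  shows "\<not> (x \<longlongrightarrow> (0, 1/2, 0)) at_top \<and> omega_limit x = {(0, 1, 0)}"
proof -
  obtain K where "0 < K"
    and K: "\<forall>w. 0 < w \<longrightarrow> w < 1 \<longrightarrow> \<bar>nOmega n 3 n1 a w - 3\<bar> \<le> K * (w / (1 - w))"
    using nOmega_dev_le[OF ap a_pos] a_lt by auto
  have "\<forall>\<eta>>0. 0 \<le> n \<eta>"
    using ap by (simp add: asymptotically_polytropic_def)
  then interpret interior_orbit n n1 a K x
    using a_pos \<open>0 < K\<close> K sol interior by unfold_locales auto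
  have "\<not> (x \<longlongrightarrow> (0, 1/2, 0)) at_top"
  proof
    assume "(x \<longlongrightarrow> (0, 1/2, 0)) at_top"
    with tendsto_P2 show False
      using tendsto_unique[OF trivial_limit_at_top_linorder] by fastforce
  qed
  then show ?thesis
    using omega_limit_eq_if_tendsto[OF tendsto_P2] by simp
qed

end
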